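(* If $q<p$ are primes, then $N_{=}(qp)\ge p^2+2q^2p-4qp+2+(p-1)\min\{q-1,p-q\}$.
   Context: Graphs are finite, undirected and simple; the order of a graph is its number of vertices. For a positive integer $k$, $N_{=}(k)$ denotes the smallest integer $n\ge1$ such that every graph on $n$ vertices contains an induced regular subgraph (all vertices of the subgraph having the same degree within it) of order exactly $k$. *)

theory Defs
  imports Main "HOL-Computational_Algebra.Primes"
begin

definition simple_graph :: "'a set \<Rightarrow> ('a \<Rightarrow> 'a \<Rightarrow> bool) \<Rightarrow> bool" where
  "simple_graph V E \<longleftrightarrow> finite V \<and> (\<forall>x y. E x y \<longrightarrow> x \<in> V \<and> y \<in> V)
     \<and> (\<forall>x y. E x y \<longrightarrow> E y x) \<and> (\<forall>x. \<not> E x x)"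

definition deg_in :: "('a \<Rightarrow> 'a \<Rightarrow> bool) \<Rightarrow> 'a set \<Rightarrow> 'a \<Rightarrow> nat" where
  "deg_in E S x = card {y \<in> S. E x y}"

definition has_induced_regular :: "'a set \<Rightarrow> ('a \<Rightarrow> 'a \<Rightarrow> bool) \<Rightarrow> nat \<Rightarrow> bool" where
  "has_induced_regular V E k \<longleftrightarrow>
     (\<exists>S \<subseteq> V. card S = k \<and> (\<exists>d. \<forall>x \<in> S. deg_in E S x = d))"

text \<open>Graphs on n vertices are represented
  (up to isomorphism) with vertex set {0..<n}.\<close>
definition N_eq :: "nat \<Rightarrow> nat" where
  "N_eq k = (LEAST n. n \<ge> 1 \<and> (\<forall>E. simple_graph {0..<n} E \<longrightarrow> has_induced_regular {0..<n} E k))"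

end

theory Submission
  imports Defs "HOL-Library.Ramsey"
begin

(*
  The witness is a disjoint union of blown-up paths P4: each component consists of four
  cliques B0, B1, B2, B3 (its blocks), with every vertex of B_i adjacent to every vertex of
  B_(i+1). Every induced path x - y - z of such a graph has an end in B0 or B3, and the closed
  neighbourhood of that end lies inside the closed neighbourhood of y. In a regular induced
  subgraph all closed neighbourhoods have the same size, so induced paths cannot occur: the
  subgraph is a disjoint union of cliques of some order k dividing qp, i.e. k is 1, q, p or qp.

  With m = min (q - 1) (p - q), take m components with blocks of orders p - 1, qp - p, p - 1,
  p - 1, and single cliques: q - 1 - m of order qp - 1, p - q - m of order p - 1 and qp - p of
  order q - 1. Of pairwise non-adjacent cliques, a component contains at most two (one meeting
  B0 or B1, one inside B2 and B3), at most one if it is a single clique, and at most one of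
  order p, because one of two such cliques lies in an end block. This excludes k = 1, q and p; no clique
  has qp vertices; and the graph has one vertex less than the stated bound.
*)

section \<open>Lower bounds for N_eq\<close>

lemma deg_in_clique:
  assumes "finite R" "pairwise E R" "\<And>x. \<not> E x x" "x \<in> R"
  shows "deg_in E R x = card R - 1"
proof -
  have "{y \<in> R. E x y} = R - {x}"
    using assms(2-4) by (auto simp: pairwise_def)
  then show ?thesis
    using assms(1,4) by (simp add: deg_in_def)
qed

lemma deg_in_independent:
  assumes "pairwise (\<lambda>u v. \<not> E u v) R" "\<And>x. \<not> E x x" "x \<in> R"
  shows "deg_in E R x = 0"
proof -
  have "\<not> E x y" if "y \<in> R" for y
    using assms that unfolding pairwise_def by (cases "y = x") auto
  then have "{y \<in> R. E x y} = {}"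
    by blast
  then show ?thesis
    unfolding deg_in_def by (simp only: card.empty)
qed

lemma N_eq_property_exists:
  "\<exists>n::nat\<ge>1. \<forall>E. simple_graph {0..<n} E \<longrightarrow> has_induced_regular {0..<n} E k"
proof -
  obtain r where "r \<ge> 1" and ramsey: "\<forall>(V::nat set) Es. finite V \<and> card V \<ge> r \<longrightarrow>
      (\<exists>R \<subseteq> V. card R = k \<and> clique R Es \<or> card R = k \<and> indep R Es)"
    using ramsey2 by blast
  have "has_induced_regular {0..<r} E k" if "simple_graph {0..<r} E" for E
  proof -
    have irrefl: "\<And>x. \<not> E x x" and sym: "\<And>x y. E x y \<Longrightarrow> E y x"
      using that unfolding simple_graph_def by blast+
    have edge: "{x, y} \<in> {{u, v} | u v. E u v} \<longleftrightarrow> E x y" for x y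
      using sym by (auto simp: doubleton_eq_iff)
    obtain R where R: "R \<subseteq> {0..<r}" "card R = k"
      and "clique R {{u, v} | u v. E u v} \<or> indep R {{u, v} | u v. E u v}"
      using ramsey[rule_format, of "{0..<r}"] by auto
    then have "pairwise E R \<or> pairwise (\<lambda>u v. \<not> E u v) R"
      unfolding clique_def indep_def pairwise_def edge by blast
    moreover have "finite R"
      using R(1) finite_subset by blast
    ultimately show ?thesis
      unfolding has_induced_regular_def
      using R deg_in_clique[of R E] deg_in_independent[of E R] irrefl by blast
  qed
  with \<open>r \<ge> 1\<close> show ?thesis by blast
qed

lemma has_induced_regular_inj_image:
  assumes "inj_on h A" "h ` A \<subseteq> V"
    and "has_induced_regular A (\<lambda>i j. i \<in> A \<and> j \<in> A \<and> E (h i) (h j)) k"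
  shows "has_induced_regular V E k"
proof -
  obtain S d where S: "S \<subseteq> A" "card S = k"
    and reg: "\<forall>i\<in>S. deg_in (\<lambda>i j. i \<in> A \<and> j \<in> A \<and> E (h i) (h j)) S i = d"
    using assms(3) unfolding has_induced_regular_def by blast
  have inj: "inj_on h S"
    using assms(1) S(1) inj_on_subset by blast
  have "deg_in E (h ` S) (h i) = d" if "i \<in> S" for i
  proof -
    have "{w \<in> h ` S. E (h i) w} = h ` {j \<in> S. E (h i) (h j)}" by blast
    then have "deg_in E (h ` S) (h i) = card {j \<in> S. E (h i) (h j)}"
      unfolding deg_in_def using inj by (simp add: card_image inj_on_subset)
    also have "\<dots> = deg_in (\<lambda>i j. i \<in> A \<and> j \<in> A \<and> E (h i) (h j)) S i"
      unfolding deg_in_def using that S(1) by (metis (no_types, lifting) subsetD)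
    also have "\<dots> = d"
      using reg that by blast
    finally show ?thesis .
  qed
  then have "\<forall>x\<in>h ` S. deg_in E (h ` S) x = d"
    by blast
  moreover have "h ` S \<subseteq> V"
    using S(1) assms(2) by blast
  moreover have "card (h ` S) = k"
    using S(2) inj by (simp add: card_image)
  ultimately show ?thesis
    unfolding has_induced_regular_def by blast
qed

lemma card_less_N_eq:
  assumes "finite V" "\<And>x y. E x y \<Longrightarrow> E y x" "\<And>x. \<not> E x x"
    and "\<not> has_induced_regular V E k"
  shows "card V < N_eq k"
proof (rule ccontr)
  let ?n = "N_eq k"
  assume "\<not> card V < ?n"
  then have "card {0..<?n} \<le> card V"
    by simp
  then obtain h where h: "h ` {0..<?n} \<subseteq> V" "inj_on h {0..<?n}"
    using card_le_inj[OF finite_atLeastLessThan assms(1)] by blast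
  let ?E = "\<lambda>i j. i \<in> {0..<?n} \<and> j \<in> {0..<?n} \<and> E (h i) (h j)"
  have "\<forall>E. simple_graph {0..<?n} E \<longrightarrow> has_induced_regular {0..<?n} E k"
    using LeastI_ex[OF N_eq_property_exists] unfolding N_eq_def by blast
  moreover have "simple_graph {0..<?n} ?E"
    unfolding simple_graph_def using assms(2,3) by simp
  ultimately have "has_induced_regular {0..<?n} ?E k"
    by blast
  then show False
    using has_induced_regular_inj_image[OF h(2,1)] assms(4) by blast
qed

section \<open>Regular graphs whose induced paths have a dominated end\<close>

definition cluster_graph :: "'a set \<Rightarrow> ('a \<Rightarrow> 'a \<Rightarrow> bool) \<Rightarrow> bool" where
  "cluster_graph S E \<longleftrightarrow>
     (\<forall>x\<in>S. \<forall>y\<in>S. \<forall>z\<in>S. E x y \<longrightarrow> E y z \<longrightarrow> x \<noteq> z \<longrightarrow> E x z)"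

definition separated_cliques :: "('a \<Rightarrow> 'a \<Rightarrow> bool) \<Rightarrow> 'a set set \<Rightarrow> bool" where
  "separated_cliques E F \<longleftrightarrow> (\<forall>X\<in>F. X \<noteq> {} \<and> pairwise E X)
     \<and> pairwise (\<lambda>X Y. \<forall>u\<in>X. \<forall>v\<in>Y. u \<noteq> v \<and> \<not> E u v) F"

lemma cluster_graph_if_regular_dominated:
  assumes "finite S" "\<And>x y. E x y \<Longrightarrow> E y x" "\<And>x. \<not> E x x"
    and regular: "\<forall>x\<in>S. deg_in E S x = d"
    and dominated: "\<And>x y z. \<lbrakk>x \<in> S; y \<in> S; z \<in> S; E x y; E y z; x \<noteq> z; \<not> E x z\<rbrakk> \<Longrightarrow>
      (\<forall>w\<in>S. E x w \<longrightarrow> w = y \<or> E y w) \<or> (\<forall>w\<in>S. E z w \<longrightarrow> w = y \<or> E y w)"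
  shows "cluster_graph S E"
proof -
  define N where "N v = {w \<in> S. w = v \<or> E v w}" for v
  have card_N: "card (N v) = Suc d" if "v \<in> S" for v
  proof -
    have "N v = insert v {w \<in> S. E v w}"
      using that unfolding N_def by auto
    then show ?thesis
      using assms(1,3) regular that by (simp add: deg_in_def)
  qed
  have not_dominated: "\<not> (\<forall>w\<in>S. E u w \<longrightarrow> w = y \<or> E y w)"
    if "u \<in> S" "y \<in> S" "v \<in> S" "E u y" "E y v" "u \<noteq> v" "\<not> E u v" for u y v
  proof
    assume "\<forall>w\<in>S. E u w \<longrightarrow> w = y \<or> E y w"
    then have "N u \<subseteq> N y"
      using that(1,4) assms(2) unfolding N_def by auto
    moreover have "v \<in> N y" "v \<notin> N u"
      using that unfolding N_def by auto
    ultimately have "N u \<subset> N y"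
      by blast
    then have "card (N u) < card (N y)"
      using assms(1) unfolding N_def by (simp add: psubset_card_mono)
    then show False
      using card_N that by simp
  qed
  show ?thesis
    unfolding cluster_graph_def
  proof (intro ballI impI, rule ccontr)
    fix x y z
    assume in_S: "x \<in> S" "y \<in> S" "z \<in> S" and "E x y" "E y z" "x \<noteq> z" "\<not> E x z"
    then have "\<not> E z x" "E z y" "E y x"
      using assms(2) by blast+
    then show False
      using dominated[OF in_S \<open>E x y\<close> \<open>E y z\<close> \<open>x \<noteq> z\<close> \<open>\<not> E x z\<close>]
        not_dominated[OF in_S \<open>E x y\<close> \<open>E y z\<close> \<open>x \<noteq> z\<close> \<open>\<not> E x z\<close>]
        not_dominated[of z y x] in_S \<open>x \<noteq> z\<close> by blast
  qed
qed

lemma regular_cluster_graph_partition: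
  assumes "finite S" "\<And>x y. E x y \<Longrightarrow> E y x" "\<And>x. \<not> E x x"
    and regular: "\<forall>x\<in>S. deg_in E S x = d" and "cluster_graph S E"
  obtains F where "separated_cliques E F" "\<Union>F = S" "\<And>X. X \<in> F \<Longrightarrow> card X = Suc d"
    "card S = card F * Suc d"
proof
  define R where "R = {(x, y) \<in> S \<times> S. x = y \<or> E x y}"
  have equiv: "equiv S R"
    using assms(2,5) unfolding equiv_def refl_on_def sym_def trans_def R_def cluster_graph_def
    by blast
  show card_class: "card X = Suc d" if "X \<in> S // R" for X
  proof -
    obtain x where x: "x \<in> S" "X = R `` {x}"
      using \<open>X \<in> S // R\<close> by (rule quotientE)
    then have "X = insert x {y \<in> S. E x y}"
      unfolding R_def by auto
    then show ?thesis
      using assms(1,3) regular x(1) by (simp add: deg_in_def)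
  qed
  show "\<Union>(S // R) = S"
    using equiv by (rule Union_quotient)
  have clique: "pairwise E X" if "X \<in> S // R" for X
    using in_quotient_imp_in_rel[OF equiv that] unfolding pairwise_def R_def by blast
  have apart: "u \<noteq> v \<and> \<not> E u v"
    if XY: "X \<in> S // R" "Y \<in> S // R" "X \<noteq> Y" and uv: "u \<in> X" "v \<in> Y" for X Y u v
  proof -
    have "X \<inter> Y = {}"
      using quotient_disj[OF equiv] XY by blast
    moreover have "v \<in> X" if "E u v"
      using in_quotient_imp_closed[OF equiv XY(1) uv(1)] in_quotient_imp_subset[OF equiv]
        XY uv that unfolding R_def by blast
    ultimately show ?thesis
      using uv by blast
  qed
  have "pairwise (\<lambda>X Y. \<forall>u\<in>X. \<forall>v\<in>Y. u \<noteq> v \<and> \<not> E u v) (S // R)"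
    using apart unfolding pairwise_def by blast
  then show "separated_cliques E (S // R)"
    unfolding separated_cliques_def using in_quotient_imp_non_empty[OF equiv] clique by blast
  have "finite (S // R)"
    using assms(1) by (rule finite_quotient) (auto simp: R_def)
  then show "card S = card (S // R) * Suc d"
    using card_partition[of "S // R" "Suc d"] card_class quotient_disj[OF equiv]
      Union_quotient[OF equiv] assms(1) by (metis mult.commute)
qed

section \<open>Disjoint unions of blown-up paths\<close>

(* (c, t, j) is vertex j of block t of component c. *)
type_synonym vertex = "nat \<times> nat \<times> nat"

abbreviation component :: "vertex \<Rightarrow> nat" where "component v \<equiv> fst v"

abbreviation block :: "vertex \<Rightarrow> nat" where "block v \<equiv> fst (snd v)"

definition blowup_adj :: "vertex \<Rightarrow> vertex \<Rightarrow> bool" where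
  "blowup_adj u v \<longleftrightarrow>
     component u = component v \<and> block u \<le> Suc (block v) \<and> block v \<le> Suc (block u) \<and> u \<noteq> v"

(* Only meaningful for nonempty X inside one component, e.g. a clique. *)
definition component_of :: "vertex set \<Rightarrow> nat" where
  "component_of X = the_elem (component ` X)"

lemma blowup_adj_sym: "blowup_adj u v \<Longrightarrow> blowup_adj v u"
  unfolding blowup_adj_def by auto

lemma blowup_adj_irrefl: "\<not> blowup_adj v v"
  unfolding blowup_adj_def by auto

lemma component_of_clique:
  assumes "pairwise blowup_adj X" "x \<in> X"
  shows "component_of X = component x"
proof -
  have "component ` X = {component x}"
    using assms unfolding pairwise_def blowup_adj_def by fastforce
  then show ?thesis
    unfolding component_of_def by simp
qed

locale P4_blowups =
  fixes n :: nat and block_size :: "nat \<Rightarrow> nat \<Rightarrow> nat"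
begin

definition vertices :: "vertex set" where
  "vertices = (SIGMA c:{..<n}. SIGMA t:{..<4}. {..<block_size c t})"

lemma mem_vertices: "(c, t, j) \<in> vertices \<longleftrightarrow> c < n \<and> t < 4 \<and> j < block_size c t"
  unfolding vertices_def by auto

lemma finite_vertices: "finite vertices"
  unfolding vertices_def by auto

lemma block_less: "v \<in> vertices \<Longrightarrow> block v < 4"
  by (cases v) (simp add: mem_vertices)

lemma card_vertices: "card vertices = (\<Sum>c<n. \<Sum>t<4. block_size c t)"
  unfolding vertices_def by simp

lemma card_block_le: "card {v \<in> vertices. component v = c \<and> block v = t} \<le> block_size c t"
proof -
  have "{v \<in> vertices. component v = c \<and> block v = t} \<subseteq> {c} \<times> {t} \<times> {..<block_size c t}"
    unfolding vertices_def by auto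
  then show ?thesis
    using card_mono[of "{c} \<times> {t} \<times> {..<block_size c t}"] by (simp add: card_cartesian_product)
qed

lemma component_of_less:
  assumes "X \<subseteq> vertices" "pairwise blowup_adj X" "X \<noteq> {}"
  shows "component_of X < n"
proof -
  obtain x where x: "x \<in> X"
    using assms(3) by blast
  then have "component x < n"
    using assms(1) by (cases x) (auto simp: mem_vertices)
  then show ?thesis
    using component_of_clique[OF assms(2) x] by simp
qed

lemma clique_card_le_consecutive_blocks:
  assumes "X \<subseteq> vertices" "pairwise blowup_adj X" "x \<in> X"
  shows "\<exists>t. card X \<le> block_size (component x) t + block_size (component x) (Suc t)"
proof -
  let ?B = "\<lambda>t. {v \<in> vertices. component v = component x \<and> block v = t}"
  define b where "b = Min (block ` X)"
  have "finite X"
    using assms(1) finite_vertices finite_subset by blast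
  then have b_le: "b \<le> block u" if "u \<in> X" for u
    using that unfolding b_def by simp
  have "b \<in> block ` X"
    unfolding b_def using \<open>finite X\<close> assms(3) by (intro Min_in) auto
  then obtain w where w: "w \<in> X" "block w = b"
    by (rule imageE) simp
  have "X \<subseteq> ?B (min b 2) \<union> ?B (Suc (min b 2))"
  proof
    fix u
    assume u: "u \<in> X"
    have "u = w \<or> blowup_adj w u" "u = x \<or> blowup_adj x u"
      using pairwiseD[OF assms(2) w(1) u] pairwiseD[OF assms(2) assms(3) u] by blast+
    then have "block u \<le> Suc b" "component u = component x"
      using w(2) unfolding blowup_adj_def by auto
    moreover have "u \<in> vertices"
      using assms(1) u by blast
    moreover have "block u = min b 2 \<or> block u = Suc (min b 2)"
      using b_le[OF u] \<open>block u \<le> Suc b\<close> block_less[OF \<open>u \<in> vertices\<close>] by arith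
    ultimately show "u \<in> ?B (min b 2) \<union> ?B (Suc (min b 2))"
      by blast
  qed
  then have "card X \<le> card (?B (min b 2) \<union> ?B (Suc (min b 2)))"
    by (intro card_mono) (simp_all add: finite_vertices)
  also have "\<dots> \<le> card (?B (min b 2)) + card (?B (Suc (min b 2)))"
    by (rule card_Un_le)
  also have "\<dots> \<le> block_size (component x) (min b 2) + block_size (component x) (Suc (min b 2))"
    using card_block_le by (intro add_mono)
  finally show ?thesis by blast
qed

lemma induced_P3_dominated_end:
  assumes "x \<in> vertices" "z \<in> vertices"
    and "blowup_adj x y" "blowup_adj y z" "x \<noteq> z" "\<not> blowup_adj x z"
  shows "(\<forall>w\<in>vertices. blowup_adj x w \<longrightarrow> w = y \<or> blowup_adj y w)
    \<or> (\<forall>w\<in>vertices. blowup_adj z w \<longrightarrow> w = y \<or> blowup_adj y w)"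
proof -
  have "block x < 4" "block z < 4"
    using assms(1,2) block_less by blast+
  moreover have "component x = component z"
    using assms(3,4) unfolding blowup_adj_def by simp
  then have "\<not> (block x \<le> Suc (block z) \<and> block z \<le> Suc (block x))"
    using assms(5,6) unfolding blowup_adj_def by blast
  moreover have "block x \<le> Suc (block y)" "block y \<le> Suc (block x)"
    "block y \<le> Suc (block z)" "block z \<le> Suc (block y)"
    using assms(3,4) unfolding blowup_adj_def by simp_all
  ultimately have "block x = 0 \<and> block y = 1 \<or> block x = 3 \<and> block y = 2
      \<or> block z = 0 \<and> block y = 1 \<or> block z = 3 \<and> block y = 2"
    by arith
  moreover have "w = y \<or> blowup_adj y w"
    if end_block: "block v = 0 \<and> block y = 1 \<or> block v = 3 \<and> block y = 2"
      and "blowup_adj v y" "w \<in> vertices" "blowup_adj v w" for v w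
  proof -
    have "block w < 4" "block w \<le> Suc (block v)" "block v \<le> Suc (block w)"
      using that block_less unfolding blowup_adj_def by auto
    then have "block w \<le> Suc (block y) \<and> block y \<le> Suc (block w)"
      using end_block by arith
    then show ?thesis
      using that(2,4) unfolding blowup_adj_def by auto
  qed
  ultimately show ?thesis
    using assms(3) blowup_adj_sym[OF assms(4)] by blast
qed

lemma regular_induced_cluster_graph:
  assumes "S \<subseteq> vertices" "\<forall>x\<in>S. deg_in blowup_adj S x = d"
  shows "cluster_graph S blowup_adj"
proof (rule cluster_graph_if_regular_dominated[OF _ blowup_adj_sym blowup_adj_irrefl assms(2)])
  show "finite S"
    using assms(1) finite_vertices finite_subset by blast
next
  fix x y z
  assume "x \<in> S" "y \<in> S" "z \<in> S" "blowup_adj x y" "blowup_adj y z" "x \<noteq> z"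
    "\<not> blowup_adj x z"
  then show "(\<forall>w\<in>S. blowup_adj x w \<longrightarrow> w = y \<or> blowup_adj y w)
    \<or> (\<forall>w\<in>S. blowup_adj z w \<longrightarrow> w = y \<or> blowup_adj y w)"
    using induced_P3_dominated_end[of x z y] assms(1) by blast
qed

lemma separated_cliques_memberD:
  assumes "\<Union>F \<subseteq> vertices" "separated_cliques blowup_adj F" "X \<in> F"
  shows "X \<subseteq> vertices" "pairwise blowup_adj X" "X \<noteq> {}"
  using assms unfolding separated_cliques_def by auto

lemma separated_cliques_nonadj:
  assumes "separated_cliques blowup_adj F" "X \<in> F" "Y \<in> F" "X \<noteq> Y" "u \<in> X" "v \<in> Y"
  shows "u \<noteq> v" "\<not> blowup_adj u v"
  using assms unfolding separated_cliques_def pairwise_def by blast+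

(* Blocks 0, 1 and blocks 2, 3 of a component each induce a clique. *)
lemma inj_on_component_half:
  assumes "\<Union>F \<subseteq> vertices" "separated_cliques blowup_adj F"
  shows "inj_on (\<lambda>X. (component_of X, \<forall>v\<in>X. 2 \<le> block v)) F"
proof (rule inj_onI, rule ccontr)
  fix X Y
  assume X: "X \<in> F" and Y: "Y \<in> F" and "X \<noteq> Y"
    and same: "(component_of X, \<forall>v\<in>X. 2 \<le> block v) = (component_of Y, \<forall>v\<in>Y. 2 \<le> block v)"
  note member = separated_cliques_memberD[OF assms]
  have same_component: "component_of X = component_of Y"
    and same_half: "(\<forall>v\<in>X. 2 \<le> block v) \<longleftrightarrow> (\<forall>v\<in>Y. 2 \<le> block v)"
    using same by simp_all
  obtain u v where uv: "u \<in> X" "v \<in> Y"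
    and half: "2 \<le> block u \<and> 2 \<le> block v \<or> block u < 2 \<and> block v < 2"
  proof (cases "\<forall>v\<in>X. 2 \<le> block v")
    case True
    moreover obtain u v where "u \<in> X" "v \<in> Y"
      using member(3)[OF X] member(3)[OF Y] by blast
    ultimately show ?thesis
      using that same_half by blast
  next
    case False
    then obtain u v where "u \<in> X" "v \<in> Y" "block u < 2" "block v < 2"
      using same_half by (meson not_le)
    then show ?thesis
      using that by blast
  qed
  have "component u = component v"
    using same_component component_of_clique[OF member(2)[OF X] uv(1)]
      component_of_clique[OF member(2)[OF Y] uv(2)] by simp
  moreover have "block u < 4" "block v < 4"
    using uv member(1)[OF X] member(1)[OF Y] block_less by blast+
  then have "block u \<le> Suc (block v) \<and> block v \<le> Suc (block u)"
    using half by arith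
  ultimately have "u = v \<or> blowup_adj u v"
    unfolding blowup_adj_def by blast
  then show False
    using separated_cliques_nonadj[OF assms(2) X Y \<open>X \<noteq> Y\<close> uv] by blast
qed

lemma separated_cliques_in_end_block:
  assumes "\<Union>F \<subseteq> vertices" "separated_cliques blowup_adj F"
    and X: "X \<in> F" and Y: "Y \<in> F" and "X \<noteq> Y" and same: "component_of X = component_of Y"
  shows "\<exists>t\<in>{0, 3}. \<exists>Z\<in>{X, Y}.
    Z \<subseteq> {v \<in> vertices. component v = component_of X \<and> block v = t}"
proof -
  note member = separated_cliques_memberD[OF assms(1,2)]
  let ?B = "\<lambda>t. {v \<in> vertices. component v = component_of X \<and> block v = t}"
  have component: "component u = component_of X" if "u \<in> X \<union> Y" for u
    using that same component_of_clique member(2) X Y by (metis Un_iff)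
  show ?thesis
  proof (cases "\<exists>u\<in>X. block u = 1 \<or> block u = 2")
    case True
    then obtain u where u: "u \<in> X" "block u = 1 \<or> block u = 2" by blast
    have "Y \<subseteq> ?B (if block u = 1 then 3 else 0)"
    proof
      fix v
      assume v: "v \<in> Y"
      have "\<not> blowup_adj u v" "u \<noteq> v"
        using separated_cliques_nonadj[OF assms(2) X Y \<open>X \<noteq> Y\<close> u(1) v] by blast+
      moreover have "v \<in> vertices"
        using v member(1)[OF Y] by blast
      moreover have "component u = component v"
        using component u(1) v by simp
      ultimately show "v \<in> ?B (if block u = 1 then 3 else 0)"
        using u(2) component[of v] v block_less[of v] unfolding blowup_adj_def by auto
    qed
    moreover have "(if block u = 1 then 3 else 0) \<in> {0 :: nat, 3}"
      by simp
    ultimately show ?thesis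
      by blast
  next
    case False
    obtain x where x: "x \<in> X"
      using member(3)[OF X] by blast
    have x_vertex: "x \<in> vertices"
      using x member(1)[OF X] by blast
    have "X \<subseteq> ?B (block x)"
    proof
      fix u
      assume u: "u \<in> X"
      then have "u \<in> vertices"
        using member(1)[OF X] by blast
      then have "block u < 4" "block x < 4"
        using x_vertex block_less by blast+
      moreover have "block u \<noteq> 1" "block u \<noteq> 2" "block x \<noteq> 1" "block x \<noteq> 2"
        using False u x by auto
      moreover have "u = x \<or> blowup_adj u x"
        using pairwiseD[OF member(2)[OF X] u x] by blast
      ultimately show "u \<in> ?B (block x)"
        using u \<open>u \<in> vertices\<close> component unfolding blowup_adj_def by auto
    qed
    moreover have "block x \<in> {0, 3}"
      using False x block_less[OF x_vertex] by auto
    ultimately show ?thesis by blast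
  qed
qed

lemma separated_cliques_min_card_le:
  assumes "\<Union>F \<subseteq> vertices" "separated_cliques blowup_adj F"
    and "X \<in> F" "Y \<in> F" "X \<noteq> Y" "component_of X = component_of Y"
  shows "min (card X) (card Y) \<le> max (block_size (component_of X) 0) (block_size (component_of X) 3)"
proof -
  let ?B = "\<lambda>t. {v \<in> vertices. component v = component_of X \<and> block v = t}"
  obtain t Z where "t \<in> {0, 3}" "Z \<in> {X, Y}" "Z \<subseteq> ?B t"
    using separated_cliques_in_end_block[OF assms] by blast
  moreover have "card (?B t) \<le> block_size (component_of X) t"
    by (rule card_block_le)
  ultimately have "card Z \<le> block_size (component_of X) t"
    using card_mono[of "?B t" Z] finite_vertices by fastforce
  then show ?thesis
    using \<open>t \<in> {0, 3}\<close> \<open>Z \<in> {X, Y}\<close> by auto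
qed

end

section \<open>The construction for primes q < p\<close>

lemma dvd_prime_product_cases:
  fixes p q :: nat
  assumes "prime p" "prime q" "k dvd q * p"
  shows "k = 1 \<or> k = q \<or> k = p \<or> k = q * p"
proof (cases "p dvd k")
  case True
  then obtain e where e: "k = p * e" by blast
  then have "e dvd q"
    using assms(1,3) by (simp add: mult.commute prime_gt_0_nat)
  then show ?thesis
    using assms(2) e by (auto simp: prime_nat_iff mult.commute)
next
  case False
  then have "coprime k p"
    using assms(1) prime_imp_coprime coprime_commute by blast
  then have "k dvd q"
    using assms(3) coprime_dvd_mult_left_iff by blast
  then show ?thesis
    using assms(2) prime_nat_iff by blast
qed

locale prime_pair =
  fixes q p :: nat
  assumes prime_q: "prime q" and prime_p: "prime p" and q_less_p: "q < p"
begin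

definition m :: nat where "m = min (q - 1) (p - q)"

definition block_size :: "nat \<Rightarrow> nat \<Rightarrow> nat" where
  "block_size c t = (if c < m then (if t = 1 then q * p - p else p - 1)
     else if t \<noteq> 1 then 0
     else if c < q - 1 then q * p - 1
     else if c < p - 1 - m then p - 1
     else q - 1)"

definition n_components :: nat where "n_components = q * p - 1 - m"

sublocale P4_blowups n_components block_size .

lemma q_ge_2: "2 \<le> q"
  using prime_q prime_ge_2_nat by blast

lemma m_le: "m \<le> q - 1" "m \<le> p - q"
  unfolding m_def by auto

lemma two_p_le: "2 * p \<le> q * p"
  using q_ge_2 by simp

lemma block_size_single_clique: "m \<le> c \<Longrightarrow> t \<noteq> 1 \<Longrightarrow> block_size c t = 0"
  unfolding block_size_def by simp

lemma consecutive_blocks_le_block_1: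
  "m \<le> c \<Longrightarrow> block_size c t + block_size c (Suc t) \<le> block_size c 1"
  using block_size_single_clique[of c t] block_size_single_clique[of c "Suc t"]
  by (cases "t = 0"; cases "t = 1") auto

lemma consecutive_blocks_le: "block_size c t + block_size c (Suc t) \<le> q * p - 1"
proof (cases "c < m")
  case True
  consider "t = 0 \<or> t = 1" | "t \<noteq> 0" "t \<noteq> 1"
    by blast
  then show ?thesis
  proof cases
    case 1
    then have "block_size c t + block_size c (Suc t) = (q * p - p) + (p - 1)"
      using True unfolding block_size_def by auto
    then show ?thesis
      using two_p_le q_less_p by linarith
  next
    case 2
    then have "block_size c t + block_size c (Suc t) = (p - 1) + (p - 1)"
      using True unfolding block_size_def by auto
    then show ?thesis
      using two_p_le q_less_p by linarith
  qed
next
  case False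
  have "p - 1 \<le> q * p - 1" "q - 1 \<le> q * p - 1"
    using two_p_le q_less_p by linarith+
  then have "block_size c 1 \<le> q * p - 1"
    using False unfolding block_size_def by simp
  then show ?thesis
    using False consecutive_blocks_le_block_1[of c t] by simp
qed

lemma consecutive_blocks_le_p:
  assumes "q - 1 \<le> c"
  shows "block_size c t + block_size c (Suc t) \<le> p - 1"
proof -
  have "m \<le> c"
    using assms m_le by linarith
  moreover have "q - 1 \<le> p - 1"
    using q_less_p by linarith
  then have "block_size c 1 \<le> p - 1"
    using assms \<open>m \<le> c\<close> unfolding block_size_def by simp
  ultimately show ?thesis
    using consecutive_blocks_le_block_1[of c t] by linarith
qed

lemma consecutive_blocks_le_q:
  assumes "p - 1 - m \<le> c"
  shows "block_size c t + block_size c (Suc t) \<le> q - 1"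
proof -
  have "m \<le> c" "\<not> c < q - 1"
    using assms m_le q_less_p by linarith+
  then have "block_size c 1 = q - 1"
    using assms unfolding block_size_def by simp
  then show ?thesis
    using consecutive_blocks_le_block_1[of c t] \<open>m \<le> c\<close> by linarith
qed

lemma end_blocks_less_p: "max (block_size c 0) (block_size c 3) < p"
proof -
  have "block_size c 0 < p" "block_size c 3 < p"
    using q_less_p unfolding block_size_def by simp_all
  then show ?thesis by simp
qed

lemma component_less_m_if_block_ne_1:
  assumes "v \<in> vertices" "block v \<noteq> 1"
  shows "component v < m"
proof (rule ccontr)
  assume "\<not> component v < m"
  then have "block_size (component v) (block v) = 0"
    using assms(2) block_size_single_clique by simp
  then show False
    using assms(1) by (cases v) (simp add: mem_vertices)
qed

lemma clique_card_bounds: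
  assumes "X \<subseteq> vertices" "pairwise blowup_adj X" "X \<noteq> {}"
  shows "card X \<le> q * p - 1"
    and "q - 1 \<le> component_of X \<Longrightarrow> card X \<le> p - 1"
    and "p - 1 - m \<le> component_of X \<Longrightarrow> card X \<le> q - 1"
proof -
  obtain x where "x \<in> X"
    using assms(3) by blast
  then obtain t where t: "card X \<le> block_size (component_of X) t + block_size (component_of X) (Suc t)"
    using clique_card_le_consecutive_blocks[OF assms(1,2)] component_of_clique[OF assms(2)] by metis
  show "card X \<le> q * p - 1"
    using t consecutive_blocks_le le_trans by blast
  show "card X \<le> p - 1" if "q - 1 \<le> component_of X"
    using t consecutive_blocks_le_p[OF that] le_trans by blast
  show "card X \<le> q - 1" if "p - 1 - m \<le> component_of X"
    using t consecutive_blocks_le_q[OF that] le_trans by blast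
qed

lemma separated_cliques_card_le_components:
  assumes "\<Union>F \<subseteq> vertices" "separated_cliques blowup_adj F"
    and "\<forall>X\<in>F. component_of X < b"
  shows "card F \<le> b + m"
proof -
  let ?slot = "\<lambda>X. (component_of X, \<forall>v\<in>X. 2 \<le> block v)"
  note member = separated_cliques_memberD[OF assms(1,2)]
  have "?slot ` F \<subseteq> {..<b} \<times> {False} \<union> {..<m} \<times> {True}"
  proof
    fix Z
    assume "Z \<in> ?slot ` F"
    then obtain X where X: "X \<in> F" and Z: "Z = ?slot X" by blast
    obtain x where x: "x \<in> X"
      using member(3)[OF X] by blast
    have "component_of X < m" if "\<forall>v\<in>X. 2 \<le> block v"
      using component_less_m_if_block_ne_1[of x] that x member(1)[OF X]
        component_of_clique[OF member(2)[OF X] x] by fastforce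
    then show "Z \<in> {..<b} \<times> {False} \<union> {..<m} \<times> {True}"
      using assms(3) X Z by auto
  qed
  then have "card (?slot ` F) \<le> card ({..<b} \<times> {False} \<union> {..<m} \<times> {True})"
    by (intro card_mono) auto
  also have "\<dots> = b + m"
    by (subst card_Un_disjoint) (auto simp: card_cartesian_product)
  finally show ?thesis
    using card_image[OF inj_on_component_half[OF assms(1,2)]] by simp
qed

lemma separated_cliques_card_le_qp:
  assumes "\<Union>F \<subseteq> vertices" "separated_cliques blowup_adj F"
  shows "card F \<le> q * p - 1"
proof -
  have "\<forall>X\<in>F. component_of X < n_components"
    using component_of_less separated_cliques_memberD[OF assms] by blast
  then have "card F \<le> n_components + m"
    by (rule separated_cliques_card_le_components[OF assms])
  then show ?thesis
    unfolding n_components_def using m_le two_p_le q_less_p by linarith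
qed

lemma separated_cliques_card_le_p:
  assumes "\<Union>F \<subseteq> vertices" "separated_cliques blowup_adj F" and big: "\<forall>X\<in>F. q \<le> card X"
  shows "card F \<le> p - 1"
proof -
  have "component_of X < p - 1 - m" if "X \<in> F" for X
    using clique_card_bounds(3)[OF separated_cliques_memberD[OF assms(1,2) that]] big that q_ge_2
    by fastforce
  then have "card F \<le> (p - 1 - m) + m"
    using separated_cliques_card_le_components[OF assms(1,2)] by blast
  then show ?thesis
    using m_le q_less_p by linarith
qed

lemma separated_cliques_card_le_q:
  assumes "\<Union>F \<subseteq> vertices" "separated_cliques blowup_adj F" and big: "\<forall>X\<in>F. p \<le> card X"
  shows "card F \<le> q - 1"
proof -
  have "component_of X < q - 1" if "X \<in> F" for X
    using clique_card_bounds(2)[OF separated_cliques_memberD[OF assms(1,2) that]] big that q_less_p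
    by fastforce
  moreover have "inj_on component_of F"
  proof (rule inj_onI, rule ccontr)
    fix X Y
    assume "X \<in> F" "Y \<in> F" "component_of X = component_of Y" "X \<noteq> Y"
    then have "min (card X) (card Y) < p"
      using separated_cliques_min_card_le[OF assms(1,2)] end_blocks_less_p le_less_trans by blast
    moreover have "p \<le> card X" "p \<le> card Y"
      using big \<open>X \<in> F\<close> \<open>Y \<in> F\<close> by blast+
    ultimately show False
      by simp
  qed
  ultimately show ?thesis
    using card_image card_mono[of "{..<q - 1}" "component_of ` F"] by fastforce
qed

lemma no_separated_cliques_of_order_qp:
  assumes "\<Union>F \<subseteq> vertices" "separated_cliques blowup_adj F"
    and size: "\<forall>X\<in>F. card X = k" and order: "card F * k = q * p"
  shows False
proof -
  from order have "k dvd q * p"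
    by (metis dvd_triv_right)
  then consider "k = 1" | "k = q" | "k = p" | "k = q * p"
    using dvd_prime_product_cases prime_p prime_q by blast
  then show False
  proof cases
    case 1
    then have "card F = q * p"
      using order by simp
    then show False
      using separated_cliques_card_le_qp[OF assms(1,2)] two_p_le q_less_p by linarith
  next
    case 2
    then have "card F = p" "\<forall>X\<in>F. q \<le> card X"
      using order size q_ge_2 by simp_all
    then show False
      using separated_cliques_card_le_p[OF assms(1,2)] q_less_p by fastforce
  next
    case 3
    then have "card F = q" "\<forall>X\<in>F. p \<le> card X"
      using order size q_less_p by simp_all
    then show False
      using separated_cliques_card_le_q[OF assms(1,2)] q_ge_2 by fastforce
  next
    case 4
    then have "card F = 1"
      using order q_ge_2 q_less_p by simp
    then obtain X where "F = {X}"
      by (rule card_1_singletonE)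
    then have "X \<in> F" "card X = q * p"
      using size 4 by auto
    then show False
      using clique_card_bounds(1)[OF separated_cliques_memberD[OF assms(1,2) \<open>X \<in> F\<close>]]
        two_p_le q_less_p by linarith
  qed
qed

lemma no_induced_regular_of_order_qp: "\<not> has_induced_regular vertices blowup_adj (q * p)"
proof
  assume "has_induced_regular vertices blowup_adj (q * p)"
  then obtain S d where S: "S \<subseteq> vertices" "card S = q * p"
    and regular: "\<forall>x\<in>S. deg_in blowup_adj S x = d"
    unfolding has_induced_regular_def by blast
  have "finite S"
    using S(1) finite_vertices finite_subset by blast
  then obtain F where sep: "separated_cliques blowup_adj F" and union: "\<Union>F = S"
    and size: "\<And>X. X \<in> F \<Longrightarrow> card X = Suc d" and order: "card S = card F * Suc d"
    using regular_cluster_graph_partition[OF _ blowup_adj_sym blowup_adj_irrefl regular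
        regular_induced_cluster_graph[OF S(1) regular]] by blast
  from union S(1) have "\<Union>F \<subseteq> vertices" by simp
  moreover from size have "\<forall>X\<in>F. card X = Suc d" by blast
  moreover from order S(2) have "card F * Suc d = q * p" by simp
  ultimately show False
    using sep no_separated_cliques_of_order_qp by blast
qed

lemma card_vertices_eq:
  "card vertices = m * ((q * p - p) + 3 * (p - 1)) + (q - 1 - m) * (q * p - 1)
    + (p - q - m) * (p - 1) + (q * p - p) * (q - 1)"
proof -
  let ?tot = "\<lambda>c. \<Sum>t<4. block_size c t"
  have const_sum: "(\<Sum>c\<in>{a..<b}. ?tot c) = (b - a) * k"
    if "\<And>c. a \<le> c \<Longrightarrow> c < b \<Longrightarrow> ?tot c = k" for a b k
    using that by simp
  have tot: "?tot c = (if c < m then (q * p - p) + 3 * (p - 1)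
      else if c < q - 1 then q * p - 1 else if c < p - 1 - m then p - 1 else q - 1)" for c
  proof -
    have "?tot c = block_size c 0 + block_size c 1 + block_size c 2 + block_size c 3"
      by (simp add: eval_nat_numeral)
    then show ?thesis
      by (simp add: block_size_def)
  qed
  have ranges: "m \<le> q - 1" "q - 1 \<le> p - 1 - m" "p - 1 - m \<le> n_components"
    using m_le q_less_p two_p_le unfolding n_components_def by linarith+
  have lengths: "m - 0 = m" "p - 1 - m - (q - 1) = p - q - m" "n_components - (p - 1 - m) = q * p - p"
    using ranges q_less_p q_ge_2 unfolding n_components_def by linarith+
  have "card vertices = (\<Sum>c\<in>{0..<m}. ?tot c) + (\<Sum>c\<in>{m..<q - 1}. ?tot c)
      + (\<Sum>c\<in>{q - 1..<p - 1 - m}. ?tot c) + (\<Sum>c\<in>{p - 1 - m..<n_components}. ?tot c)"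
    using ranges unfolding card_vertices lessThan_atLeast0
    by (simp add: sum.atLeastLessThan_concat)
  also have "(\<Sum>c\<in>{0..<m}. ?tot c) = (m - 0) * ((q * p - p) + 3 * (p - 1))"
    by (rule const_sum) (simp add: tot)
  also have "(\<Sum>c\<in>{m..<q - 1}. ?tot c) = (q - 1 - m) * (q * p - 1)"
    by (rule const_sum) (simp add: tot)
  also have "(\<Sum>c\<in>{q - 1..<p - 1 - m}. ?tot c) = (p - 1 - m - (q - 1)) * (p - 1)"
    by (rule const_sum) (use ranges in \<open>simp add: tot\<close>)
  also have "(\<Sum>c\<in>{p - 1 - m..<n_components}. ?tot c) = (n_components - (p - 1 - m)) * (q - 1)"
    by (rule const_sum) (use ranges in \<open>simp add: tot\<close>)
  finally show ?thesis
    by (simp only: lengths)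
qed

lemma card_vertices_formula:
  "int (card vertices) + 1
    = int p ^ 2 + 2 * int q ^ 2 * int p - 4 * int q * int p + 2 + (int p - 1) * int m"
proof -
  have "int (card vertices) = int m * (int (q * p - p) + 3 * int (p - 1))
      + int (q - 1 - m) * int (q * p - 1) + int (p - q - m) * int (p - 1)
      + int (q * p - p) * int (q - 1)"
    unfolding card_vertices_eq by (simp only: of_nat_add of_nat_mult of_nat_numeral)
  moreover have "int (q * p - p) = int q * int p - int p" "int (q * p - 1) = int q * int p - 1"
    using of_nat_diff[of p "q * p"] of_nat_diff[of 1 "q * p"] two_p_le q_less_p by simp_all
  moreover have "int (q - 1 - m) = int q - 1 - int m" "int (p - q - m) = int p - int q - int m"
    "int (p - 1) = int p - 1" "int (q - 1) = int q - 1"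
    using m_le q_less_p q_ge_2 by simp_all
  ultimately show ?thesis
    by (simp add: algebra_simps power2_eq_square)
qed

end

theorem theorem8:
  fixes p q :: nat
  assumes "prime p" and "prime q" and "q < p"
  shows "int (N_eq (q * p)) \<ge> int (p^2 + 2 * q^2 * p) - int (4 * q * p) + 2
           + int (p - 1) * int (min (q - 1) (p - q))"
proof -
  interpret prime_pair q p
    using assms by unfold_locales
  have "card vertices < N_eq (q * p)"
    using card_less_N_eq[OF finite_vertices blowup_adj_sym blowup_adj_irrefl
        no_induced_regular_of_order_qp] .
  moreover have "int (p^2 + 2 * q^2 * p) - int (4 * q * p) + 2 + int (p - 1) * int m
      = int (card vertices) + 1"
    unfolding card_vertices_formula using assms(3) by (simp add: of_nat_diff)
  ultimately show ?thesis
    unfolding m_def by linarith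
qed

end
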